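(* Let $n\geq 2$ and let $K\subset\mathbb{R}^n$ be a convex body with $\mathrm{r}_{n-1}(K)>0$. Then \[ \frac{\mathrm{R}_2(K)}{\mathrm{r}_{n-1}(K)}\leq 2\sqrt{2}\sqrt{n}. \]
   Context: A convex body is a compact convex subset of $\mathbb{R}^n$. For $1\le i\le n$, let $\mathcal{L}^n_i$ be the set of $i$-dimensional linear subspaces of $\mathbb{R}^n$, $K|L$ the orthogonal projection of $K$ onto $L$, $L^\perp$ the orthogonal complement. For a set $C$ contained in an affine subspace $A$, $\mathrm{R}(C;A)$ and $\mathrm{r}(C;A)$ denote the Euclidean circumradius and inradius of $C$ measured within $A$. Define $\mathrm{R}_i(K)=\min_{L\in\mathcal{L}^n_i}\mathrm{R}(K|L;L)$ and $\mathrm{r}_i(K)=\max_{L\in\mathcal{L}^n_i}\max_{x\in L^\perp}\mathrm{r}(K\cap(x+L);x+L)$. *)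

theory Defs
  imports "HOL-Analysis.Analysis"
begin

definition convex_body :: "'a::euclidean_space set \<Rightarrow> bool" where
  "convex_body K \<longleftrightarrow> compact K \<and> convex K \<and> K \<noteq> {}"

definition orth_proj :: "'a::euclidean_space set \<Rightarrow> 'a \<Rightarrow> 'a" where
  "orth_proj L x = (THE p. p \<in> L \<and> x - p \<in> orthogonal_comp L)"

definition circumradius_in :: "'a::euclidean_space set \<Rightarrow> 'a set \<Rightarrow> real" where
  "circumradius_in C A = Inf {r. \<exists>c\<in>A. C \<subseteq> cball c r}"

definition inradius_in :: "'a::euclidean_space set \<Rightarrow> 'a set \<Rightarrow> real" where
  "inradius_in C A = (if C = {} then 0 else Sup {r. r \<ge> 0 \<and> (\<exists>c\<in>A. cball c r \<inter> A \<subseteq> C)})"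

definition lin_subspaces :: "nat \<Rightarrow> 'a::euclidean_space set set" where
  "lin_subspaces i = {L. subspace L \<and> dim L = i}"

definition R_i :: "nat \<Rightarrow> 'a::euclidean_space set \<Rightarrow> real" where
  "R_i i K = Inf {circumradius_in (orth_proj L ` K) L | L. L \<in> lin_subspaces i}"

definition r_i :: "nat \<Rightarrow> 'a::euclidean_space set \<Rightarrow> real" where
  "r_i i K = Sup {inradius_in (K \<inter> ((+) x ` L)) ((+) x ` L) | L x.
                  L \<in> lin_subspaces i \<and> x \<in> orthogonal_comp L}"

end

theory Submission
  imports Defs
begin

text \<open>
  Let h be the support function of K, \<nu> a unit direction of minimal width, P the orthogonal
  projection onto the hyperplane orthogonal to \<nu>, and r = r_(n-1)(K).

  If no convex combination of the points (w, h w - r |P w|), w a unit vector, had the form (0, t)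
  with t \<le> 0, a separating hyperplane would give an affine minorant \<langle>c, w\<rangle> + \<delta> of
  h w - r |P w|; then the ball of radius r + \<delta> about c in the section of K through c
  orthogonal to \<nu> would lie in K, contradicting the maximality of r. Caratheodory's theorem
  therefore yields at most n + 2 unit vectors w with weights u \<ge> 0, \<Sum> u w = 0 and
  \<Sum> u h(w) \<le> r \<Lambda>, where \<Lambda> = \<Sum> u |P w| > 0. (When K is flat, i.e. of width 0
  in direction \<nu>, the directions are taken orthogonal to \<nu>, which keeps \<Lambda> positive.)

  With signs \<epsilon> chosen greedily, v = 1/2 \<Sum> \<epsilon> u w has width b(v) \<le> \<Sum> u h(w) \<le> r \<Lambda>,
  where b(x) = h x + h (-x), while |P v| \<ge> \<Lambda> / sqrt (8 n) by Cauchy-Schwarz. Projected onto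
  the plane spanned by \<nu> and P v, K lies in a strip of width b(\<nu>) normal to \<nu> and a strip
  of width b(v) normal to v. Since b(\<nu>) |v| \<le> b(v) by minimality, their intersection lies
  in a disc of radius b(v) / |P v|, so R_2(K) \<le> r \<Lambda> / |P v| \<le> 2 sqrt 2 sqrt n r.
\<close>

section \<open>Support function and width\<close>

definition support_fun :: "'a::euclidean_space set \<Rightarrow> 'a \<Rightarrow> real" where
  "support_fun K w = Sup ((\<lambda>x. inner w x) ` K)"

definition width :: "'a::euclidean_space set \<Rightarrow> 'a \<Rightarrow> real" where
  "width K w = support_fun K w + support_fun K (- w)"

lemma support_fun_ge:
  assumes "compact K" "x \<in> K"
  shows "inner w x \<le> support_fun K w"
proof -
  have "compact ((\<lambda>x. inner w x) ` K)"
    by (rule compact_continuous_image[OF _ assms(1)]) (intro continuous_intros)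
  hence "bdd_above ((\<lambda>x. inner w x) ` K)"
    by (simp add: bounded_imp_bdd_above compact_imp_bounded)
  thus ?thesis unfolding support_fun_def using assms(2) by (auto intro: cSup_upper)
qed

lemma support_fun_attained:
  assumes "compact K" "K \<noteq> {}"
  obtains x where "x \<in> K" "inner w x = support_fun K w"
proof -
  have "compact ((\<lambda>x. inner w x) ` K)"
    by (rule compact_continuous_image[OF _ assms(1)]) (intro continuous_intros)
  then obtain s where s: "s \<in> (\<lambda>x. inner w x) ` K" "\<forall>t\<in>(\<lambda>x. inner w x) ` K. t \<le> s"
    using compact_attains_sup assms(2) by blast
  hence "support_fun K w = s" unfolding support_fun_def by (intro cSup_eq_maximum) auto
  thus ?thesis using s(1) that by auto
qed

lemma support_fun_scaleR:
  assumes "compact K" "K \<noteq> {}" "c \<ge> 0"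
  shows "support_fun K (c *\<^sub>R w) = c * support_fun K w"
proof (rule antisym)
  obtain x where x: "x \<in> K" "inner (c *\<^sub>R w) x = support_fun K (c *\<^sub>R w)"
    using support_fun_attained[OF assms(1,2)] .
  show "support_fun K (c *\<^sub>R w) \<le> c * support_fun K w"
    using x mult_left_mono[OF support_fun_ge[OF assms(1) x(1), of w] assms(3)] by simp
  obtain y where y: "y \<in> K" "inner w y = support_fun K w"
    using support_fun_attained[OF assms(1,2)] .
  show "c * support_fun K w \<le> support_fun K (c *\<^sub>R w)"
    using y support_fun_ge[OF assms(1) y(1), of "c *\<^sub>R w"] by simp
qed

lemma lipschitz_support_fun:
  assumes "compact K" "K \<noteq> {}"
  obtains M where "M-lipschitz_on UNIV (support_fun K)"
proof -
  obtain M where M: "M > 0" "\<And>x. x \<in> K \<Longrightarrow> norm x \<le> M"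
    using compact_imp_bounded[OF assms(1)] unfolding bounded_pos by auto
  have one_sided: "support_fun K w1 \<le> support_fun K w2 + M * dist w1 w2" for w1 w2
  proof -
    obtain x where x: "x \<in> K" "inner w1 x = support_fun K w1"
      using support_fun_attained[OF assms] .
    have "inner w1 x = inner w2 x + inner (w1 - w2) x" by (simp add: inner_diff_left)
    also have "inner (w1 - w2) x \<le> norm (w1 - w2) * norm x" by (rule norm_cauchy_schwarz)
    also have "\<dots> \<le> M * dist w1 w2" using M(2)[OF x(1)] by (simp add: dist_norm mult_right_mono mult.commute)
    finally show ?thesis using x support_fun_ge[OF assms(1) x(1), of w2] by simp
  qed
  have "M-lipschitz_on UNIV (support_fun K)"
  proof (rule lipschitz_onI)
    fix w1 w2 :: 'a
    show "dist (support_fun K w1) (support_fun K w2) \<le> M * dist w1 w2"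
      using one_sided[of w1 w2] one_sided[of w2 w1] by (simp add: dist_real_def dist_commute abs_le_iff)
  qed (use M(1) in simp)
  thus ?thesis using that by blast
qed

lemma continuous_on_support_fun:
  assumes "compact K" "K \<noteq> {}"
  shows "continuous_on S (support_fun K)"
proof -
  obtain M where "M-lipschitz_on UNIV (support_fun K)" using lipschitz_support_fun[OF assms] .
  thus ?thesis by (metis lipschitz_on_continuous_on continuous_on_subset subset_UNIV)
qed

lemma support_fun_less_sgn:
  assumes "compact K" "K \<noteq> {}" "support_fun K w < inner w y"
  shows "norm (sgn w) = 1" "support_fun K (sgn w) < inner (sgn w) y"
proof -
  have "support_fun K 0 = 0" using assms(2) by (simp add: support_fun_def)
  hence "w \<noteq> 0" using assms(3) by auto
  thus "norm (sgn w) = 1" by (simp add: norm_sgn)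
  have "support_fun K (sgn w) = inverse (norm w) * support_fun K w"
    by (simp add: sgn_div_norm support_fun_scaleR assms(1,2))
  thus "support_fun K (sgn w) < inner (sgn w) y"
    using assms(3) \<open>w \<noteq> 0\<close> by (simp add: sgn_div_norm)
qed

lemma exists_support_fun_less:
  fixes K :: "'a::euclidean_space set"
  assumes "compact K" "convex K" "K \<noteq> {}" "y \<notin> K"
  obtains w where "support_fun K w < inner w y"
proof -
  obtain a b where ab: "inner a y < b" "\<forall>x\<in>K. b < inner a x"
    using separating_hyperplane_closed_point[OF assms(2) compact_imp_closed[OF assms(1)] assms(4)]
    by blast
  obtain x where x: "x \<in> K" "inner (- a) x = support_fun K (- a)"
    using support_fun_attained[OF assms(1,3)] .
  have "b < inner a x" using ab(2) x(1) by blast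
  hence "support_fun K (- a) < inner (- a) y" using ab(1) x(2) by simp
  thus ?thesis using that by blast
qed

lemma width_nonneg:
  assumes "compact K" "K \<noteq> {}"
  shows "0 \<le> width K w"
proof -
  obtain x where "x \<in> K" using assms(2) by blast
  thus ?thesis using support_fun_ge[OF assms(1), of x w] support_fun_ge[OF assms(1), of x "-w"]
    unfolding width_def by simp
qed

lemma width_scaleR:
  assumes "compact K" "K \<noteq> {}" "c \<ge> 0"
  shows "width K (c *\<^sub>R w) = c * width K w"
  using support_fun_scaleR[OF assms, of w] support_fun_scaleR[OF assms, of "-w"]
  by (simp add: width_def distrib_left)

lemma width_attained:
  assumes "compact K" "K \<noteq> {}"
  obtains x y where "x \<in> K" "y \<in> K" "width K w = inner w (x - y)"
proof -
  obtain x where "x \<in> K" "inner w x = support_fun K w" using support_fun_attained[OF assms] .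
  moreover obtain y where "y \<in> K" "inner (- w) y = support_fun K (- w)"
    using support_fun_attained[OF assms] .
  ultimately show ?thesis using that by (simp add: width_def inner_diff_right)
qed

lemma exists_min_width_direction:
  fixes K :: "'a::euclidean_space set"
  assumes "compact K" "K \<noteq> {}"
  obtains \<nu> where "norm \<nu> = 1" "\<And>w. norm w = 1 \<Longrightarrow> width K \<nu> \<le> width K w"
proof -
  have "continuous_on (sphere 0 1) (width K)"
    unfolding width_def[abs_def]
    by (intro continuous_intros continuous_on_support_fun[OF assms]
        continuous_on_compose2[OF continuous_on_support_fun[OF assms, of UNIV]]) auto
  moreover have "sphere (0::'a) 1 \<noteq> {}" by simp
  ultimately obtain \<nu> where "\<nu> \<in> sphere 0 1" "\<forall>w\<in>sphere 0 1. width K \<nu> \<le> width K w"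
    using continuous_attains_inf[OF compact_sphere] by blast
  thus ?thesis using that by simp
qed

section \<open>Orthonormal pairs and the projection off a unit vector\<close>

definition perp_proj :: "'a::real_inner \<Rightarrow> 'a \<Rightarrow> 'a" where
  "perp_proj \<nu> w = w - inner w \<nu> *\<^sub>R \<nu>"

lemma linear_perp_proj: "linear (perp_proj \<nu>)"
  by (rule linearI) (simp_all add: perp_proj_def inner_add_left algebra_simps)

lemma inner_perp_proj_split: "inner w v = inner (perp_proj \<nu> w) v + inner w \<nu> * inner \<nu> v"
  by (simp add: perp_proj_def inner_diff_left)

lemma inner_perp_proj_unit:
  assumes "norm \<nu> = 1"
  shows "inner \<nu> (perp_proj \<nu> w) = 0"
  using assms by (simp add: perp_proj_def inner_diff_right norm_eq_1 inner_commute)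

lemma norm_perp_proj_le:
  assumes "norm \<nu> = 1"
  shows "norm (perp_proj \<nu> w) \<le> norm w"
proof -
  have "(norm w)\<^sup>2 = (norm (perp_proj \<nu> w))\<^sup>2 + (inner w \<nu>)\<^sup>2"
    using assms unfolding perp_proj_def power2_norm_eq_inner
    by (simp add: inner_diff_left inner_diff_right norm_eq_1 inner_commute power2_eq_square)
  hence "(norm (perp_proj \<nu> w))\<^sup>2 \<le> (norm w)\<^sup>2" by simp
  thus ?thesis by (rule power2_le_imp_le) simp
qed

lemma perp_proj_decomposition:
  fixes \<nu> v :: "'a::real_inner"
  assumes "norm \<nu> = 1" "perp_proj \<nu> v \<noteq> 0"
  obtains e where "norm e = 1" "inner \<nu> e = 0" "v = inner v \<nu> *\<^sub>R \<nu> + norm (perp_proj \<nu> v) *\<^sub>R e"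
proof (rule that)
  show "norm (sgn (perp_proj \<nu> v)) = 1" using assms(2) by (simp add: norm_sgn)
  show "inner \<nu> (sgn (perp_proj \<nu> v)) = 0" using inner_perp_proj_unit[OF assms(1)] by (simp add: sgn_div_norm)
  show "v = inner v \<nu> *\<^sub>R \<nu> + norm (perp_proj \<nu> v) *\<^sub>R sgn (perp_proj \<nu> v)"
    using assms(2) by (simp add: sgn_div_norm perp_proj_def)
qed

lemma exists_unit_orthogonal:
  fixes \<nu> :: "'a::euclidean_space"
  assumes "DIM('a) \<ge> 2" "norm \<nu> = 1"
  obtains e where "norm e = 1" "inner \<nu> e = 0"
proof -
  have "\<nu> \<noteq> 0" using assms(2) by auto
  hence "dim {y. inner \<nu> y = 0} = DIM('a) - 1" by (rule dim_hyperplane)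
  hence "dim {y. inner \<nu> y = 0} \<noteq> 0" using assms(1) by linarith
  hence "\<not> {y. inner \<nu> y = 0} \<subseteq> {0}" by (simp only: dim_eq_0 not_False_eq_True)
  then obtain l where l: "inner \<nu> l = 0" "l \<noteq> 0" by blast
  show ?thesis by (rule that[of "sgn l"]) (use l in \<open>simp_all add: norm_sgn sgn_div_norm\<close>)
qed

lemma mem_span_pair: "y \<in> span {a, b} \<longleftrightarrow> (\<exists>s t. y = s *\<^sub>R a + t *\<^sub>R b)"
  unfolding span_insert span_singleton by (auto simp: algebra_simps)

lemma norm_orthonormal_pair_combination:
  fixes \<nu> e :: "'a::real_inner"
  assumes "norm \<nu> = 1" "norm e = 1" "inner \<nu> e = 0"
  shows "(norm (a *\<^sub>R \<nu> + b *\<^sub>R e))\<^sup>2 = a\<^sup>2 + b\<^sup>2"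
  using assms unfolding power2_norm_eq_inner
  by (simp add: inner_add_left inner_add_right norm_eq_1 inner_commute power2_eq_square)

lemma orth_proj_span_orthonormal_pair:
  fixes \<nu> e :: "'a::euclidean_space"
  assumes "norm \<nu> = 1" "norm e = 1" "inner \<nu> e = 0"
  shows "orth_proj (span {\<nu>, e}) x = inner x \<nu> *\<^sub>R \<nu> + inner x e *\<^sub>R e"
  unfolding orth_proj_def
proof (rule the_equality)
  have unit: "inner \<nu> \<nu> = 1" "inner e e = 1" and orth: "inner e \<nu> = 0"
    using assms by (simp_all add: norm_eq_1 inner_commute)
  let ?p = "inner x \<nu> *\<^sub>R \<nu> + inner x e *\<^sub>R e"
  have "inner y (x - ?p) = 0" if y: "y \<in> span {\<nu>, e}" for y
  proof -
    obtain s t where "y = s *\<^sub>R \<nu> + t *\<^sub>R e" using y unfolding mem_span_pair by blast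
    thus ?thesis
      by (simp add: inner_add_left inner_add_right inner_diff_right unit orth assms(3) inner_commute[of x])
  qed
  hence "x - ?p \<in> orthogonal_comp (span {\<nu>, e})"
    unfolding orthogonal_comp_def orthogonal_def by blast
  moreover have "?p \<in> span {\<nu>, e}" unfolding mem_span_pair by blast
  ultimately show "?p \<in> span {\<nu>, e} \<and> x - ?p \<in> orthogonal_comp (span {\<nu>, e})" by blast
next
  have unit: "inner \<nu> \<nu> = 1" "inner e e = 1" and orth: "inner e \<nu> = 0"
    using assms by (simp_all add: norm_eq_1 inner_commute)
  fix p assume p: "p \<in> span {\<nu>, e} \<and> x - p \<in> orthogonal_comp (span {\<nu>, e})"
  then obtain s t where st: "p = s *\<^sub>R \<nu> + t *\<^sub>R e" unfolding mem_span_pair by blast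
  have "\<nu> \<in> span {\<nu>, e}" "e \<in> span {\<nu>, e}" by (auto intro: span_base)
  hence "inner \<nu> (x - p) = 0" "inner e (x - p) = 0"
    using p unfolding orthogonal_comp_def orthogonal_def by auto
  hence "s = inner x \<nu>" "t = inner x e" unfolding st
    by (auto simp: inner_add_right inner_diff_right unit orth assms(3) inner_commute[of x])
  thus "p = inner x \<nu> *\<^sub>R \<nu> + inner x e *\<^sub>R e" using st by simp
qed

lemma span_orthonormal_pair_in_lin_subspaces:
  fixes \<nu> e :: "'a::euclidean_space"
  assumes "norm \<nu> = 1" "norm e = 1" "inner \<nu> e = 0"
  shows "span {\<nu>, e} \<in> lin_subspaces 2"
proof -
  have "\<nu> \<noteq> e" using assms by auto
  moreover have "independent {\<nu>, e}"
    by (rule pairwise_orthogonal_independent)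
       (use assms in \<open>auto simp: pairwise_def orthogonal_def inner_commute\<close>)
  ultimately show ?thesis by (simp add: lin_subspaces_def dim_eq_card_independent)
qed

lemma translate_hyperplane_eq:
  fixes \<nu> c :: "'a::real_inner"
  assumes "norm \<nu> = 1"
  shows "(+) (inner c \<nu> *\<^sub>R \<nu>) ` {y. inner \<nu> y = 0} = {y. inner \<nu> (y - c) = 0}"
proof (intro set_eqI iffI)
  fix y assume "y \<in> (+) (inner c \<nu> *\<^sub>R \<nu>) ` {y. inner \<nu> y = 0}"
  thus "y \<in> {y. inner \<nu> (y - c) = 0}"
    using assms by (auto simp: inner_diff_right inner_add_right norm_eq_1 inner_commute)
next
  fix y assume "y \<in> {y. inner \<nu> (y - c) = 0}"
  hence "y - inner c \<nu> *\<^sub>R \<nu> \<in> {y. inner \<nu> y = 0}"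
    using assms by (simp add: inner_diff_right norm_eq_1 inner_commute)
  thus "y \<in> (+) (inner c \<nu> *\<^sub>R \<nu>) ` {y. inner \<nu> y = 0}"
    by (metis add.commute diff_add_cancel rev_image_eqI)
qed

section \<open>Bounds on circumradii and inradii\<close>

lemma R_i_le_of_proj_subset_cball:
  fixes K :: "'a::euclidean_space set"
  assumes "K \<noteq> {}" "E \<in> lin_subspaces i" "c \<in> E" "orth_proj E ` K \<subseteq> cball c R"
  shows "R_i i K \<le> R"
proof -
  define radii where "radii = {circumradius_in (orth_proj L ` K) L | L. L \<in> lin_subspaces i}"
  have radius_nonneg: "0 \<le> r" if "orth_proj L ` K \<subseteq> cball c' r" for L c' r
  proof -
    obtain x where "x \<in> K" using assms(1) by blast
    hence "orth_proj L x \<in> cball c' r" using that by blast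
    thus ?thesis by (metis dist_not_less_zero mem_cball order.trans not_le)
  qed
  have "bdd_below radii" unfolding bdd_below_def
  proof (intro exI ballI)
    fix y assume "y \<in> radii"
    then obtain L where "y = circumradius_in (orth_proj L ` K) L" unfolding radii_def by blast
    define S where "S = {r. \<exists>c\<in>L. orth_proj L ` K \<subseteq> cball c r}"
    have y: "y = Inf S" unfolding \<open>y = _\<close> S_def circumradius_in_def by simp
    show "min 0 (Inf ({}::real set)) \<le> y"
    proof (cases "S = {}")
      case True thus ?thesis using y by simp
    next
      case False
      have "0 \<le> Inf S" by (rule cInf_greatest[OF False]) (use radius_nonneg in \<open>auto simp: S_def\<close>)
      thus ?thesis using y by simp
    qed
  qed
  moreover have "circumradius_in (orth_proj E ` K) E \<le> R"
    unfolding circumradius_in_def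
  proof (rule cInf_lower)
    show "R \<in> {r. \<exists>c\<in>E. orth_proj E ` K \<subseteq> cball c r}" using assms(3,4) by blast
    show "bdd_below {r. \<exists>c\<in>E. orth_proj E ` K \<subseteq> cball c r}"
      by (rule bdd_belowI[where m=0]) (use radius_nonneg in blast)
  qed
  moreover have "circumradius_in (orth_proj E ` K) E \<in> radii" unfolding radii_def using assms(2) by blast
  ultimately have "Inf radii \<le> R" by (meson cInf_lower2)
  thus ?thesis unfolding R_i_def radii_def .
qed

lemma radius_le_diameter_of_relative_ball:
  fixes K :: "'a::euclidean_space set"
  assumes "bounded K" "subspace L" "L \<noteq> {0}" "c \<in> (+) x ` L" "cball c \<rho> \<inter> (+) x ` L \<subseteq> K"
    "\<rho> \<ge> 0"
  shows "\<rho> \<le> diameter K"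
proof -
  obtain l where l: "l \<in> L" "l \<noteq> 0" using assms(2,3) subspace_0 by blast
  define e where "e = sgn l"
  have e: "e \<in> L" "norm e = 1" unfolding e_def sgn_div_norm using assms(2) l by (auto intro: subspace_scale)
  obtain l0 where l0: "l0 \<in> L" "c = x + l0" using assms(4) by blast
  have "l0 + \<rho> *\<^sub>R e \<in> L" "l0 - \<rho> *\<^sub>R e \<in> L"
    using assms(2) l0(1) e(1) by (simp_all add: subspace_add subspace_diff subspace_scale)
  hence "x + (l0 + \<rho> *\<^sub>R e) \<in> (+) x ` L" "x + (l0 - \<rho> *\<^sub>R e) \<in> (+) x ` L" by blast+
  hence "c + \<rho> *\<^sub>R e \<in> (+) x ` L" "c - \<rho> *\<^sub>R e \<in> (+) x ` L"
    using l0(2) by (simp_all add: add.assoc add_diff_eq)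
  moreover have "c + \<rho> *\<^sub>R e \<in> cball c \<rho>" "c - \<rho> *\<^sub>R e \<in> cball c \<rho>"
    using e(2) assms(6) by (simp_all add: dist_norm)
  ultimately have "dist (c + \<rho> *\<^sub>R e) (c - \<rho> *\<^sub>R e) \<le> diameter K"
    using assms(1,5) by (blast intro: diameter_bounded_bound)
  moreover have "(c + \<rho> *\<^sub>R e) - (c - \<rho> *\<^sub>R e) = (2 * \<rho>) *\<^sub>R e" by (simp add: algebra_simps flip: scaleR_2)
  ultimately show ?thesis using e(2) assms(6) by (simp add: dist_norm)
qed

lemma inradius_in_le_diameter:
  fixes K :: "'a::euclidean_space set"
  assumes "bounded K" "subspace L" "L \<noteq> {0}"
  shows "inradius_in (K \<inter> (+) x ` L) ((+) x ` L) \<le> diameter K"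
proof (cases "K \<inter> (+) x ` L = {}")
  case True
  thus ?thesis using diameter_ge_0[OF assms(1)] by (simp add: inradius_in_def)
next
  case False
  then obtain q where "q \<in> K" "q \<in> (+) x ` L" by blast
  let ?S = "{r. r \<ge> 0 \<and> (\<exists>c\<in>(+) x ` L. cball c r \<inter> (+) x ` L \<subseteq> K \<inter> (+) x ` L)}"
  have "0 \<in> ?S" using \<open>q \<in> K\<close> \<open>q \<in> (+) x ` L\<close> by (intro CollectI conjI bexI[of _ q]) auto
  have "Sup ?S \<le> diameter K"
  proof (rule cSup_least)
    show "?S \<noteq> {}" using \<open>0 \<in> ?S\<close> by blast
    show "r \<le> diameter K" if "r \<in> ?S" for r
      using that radius_le_diameter_of_relative_ball[OF assms] by blast
  qed
  thus ?thesis using False by (simp add: inradius_in_def)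
qed

lemma radius_le_inradius_in:
  fixes K :: "'a::euclidean_space set"
  assumes "bounded K" "subspace L" "L \<noteq> {0}" "c \<in> (+) x ` L" "cball c \<rho> \<inter> (+) x ` L \<subseteq> K"
    "\<rho> \<ge> 0"
  shows "\<rho> \<le> inradius_in (K \<inter> (+) x ` L) ((+) x ` L)"
proof -
  let ?A = "(+) x ` L"
  let ?S = "{r. r \<ge> 0 \<and> (\<exists>c\<in>?A. cball c r \<inter> ?A \<subseteq> K \<inter> ?A)}"
  have "\<rho> \<in> ?S" using assms(4-6) by blast
  moreover have "bdd_above ?S"
    by (rule bdd_aboveI[of _ "diameter K"]) (use radius_le_diameter_of_relative_ball[OF assms(1-3)] in blast)
  ultimately have "\<rho> \<le> Sup ?S" by (rule cSup_upper)
  moreover have "c \<in> cball c \<rho> \<inter> ?A" using assms(4,6) by simp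
  hence "K \<inter> ?A \<noteq> {}" using assms(5) by blast
  ultimately show ?thesis by (simp add: inradius_in_def)
qed

lemma inradius_in_le_r_i:
  fixes K :: "'a::euclidean_space set"
  assumes "bounded K" "i \<noteq> 0" "L \<in> lin_subspaces i" "x \<in> orthogonal_comp L"
  shows "inradius_in (K \<inter> (+) x ` L) ((+) x ` L) \<le> r_i i K"
  unfolding r_i_def
proof (rule cSup_upper)
  have nontrivial: "subspace L' \<and> L' \<noteq> {0}" if "L' \<in> lin_subspaces i" for L'
    using that assms(2) by (auto simp: lin_subspaces_def)
  show "bdd_above {inradius_in (K \<inter> (+) x ` L) ((+) x ` L) | L x.
      L \<in> lin_subspaces i \<and> x \<in> orthogonal_comp L}"
    unfolding bdd_above_def using inradius_in_le_diameter[OF assms(1)] nontrivial by blast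
qed (use assms(3,4) in blast)

definition section_ball :: "'a::real_inner \<Rightarrow> 'a \<Rightarrow> real \<Rightarrow> 'a set" where
  "section_ball \<nu> c \<rho> = {y. inner \<nu> (y - c) = 0 \<and> norm (y - c) \<le> \<rho>}"

lemma section_ball_radius_le_r_i:
  fixes K :: "'a::euclidean_space set"
  assumes "bounded K" "DIM('a) \<ge> 2" "norm \<nu> = 1" "\<rho> \<ge> 0" "section_ball \<nu> c \<rho> \<subseteq> K"
  shows "\<rho> \<le> r_i (DIM('a) - 1) K"
proof -
  define L where "L = {y. inner \<nu> y = 0}"
  define x where "x = inner c \<nu> *\<^sub>R \<nu>"
  have "\<nu> \<noteq> 0" using assms(3) by auto
  hence L: "L \<in> lin_subspaces (DIM('a) - 1)"
    unfolding lin_subspaces_def L_def by (simp add: dim_hyperplane subspace_hyperplane)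
  hence "subspace L" "L \<noteq> {0}" using assms(2) by (auto simp: lin_subspaces_def)
  have x: "x \<in> orthogonal_comp L"
    unfolding orthogonal_comp_def orthogonal_def L_def x_def by (simp add: inner_commute)
  have hyperplane: "(+) x ` L = {y. inner \<nu> (y - c) = 0}"
    unfolding x_def L_def by (rule translate_hyperplane_eq[OF assms(3)])
  have "c \<in> (+) x ` L" "cball c \<rho> \<inter> (+) x ` L \<subseteq> K"
    using assms(5) unfolding hyperplane section_ball_def by (auto simp: dist_norm norm_minus_commute)
  hence "\<rho> \<le> inradius_in (K \<inter> (+) x ` L) ((+) x ` L)"
    using radius_le_inradius_in[OF assms(1) \<open>subspace L\<close> \<open>L \<noteq> {0}\<close> _ _ assms(4)] by blast
  also have "\<dots> \<le> r_i (DIM('a) - 1) K"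
    by (rule inradius_in_le_r_i[OF assms(1) _ L x]) (use assms(2) in simp)
  finally show ?thesis .
qed

section \<open>Hyperplane sections cut out by support half-spaces\<close>

text \<open>
  W suffices to certify membership in the sections of K orthogonal to \<nu>: after moving the base
  point c in a direction that no w \<in> W sees, a point of the section through c lies in K as soon
  as it satisfies the support inequalities with normals in W.
\<close>
definition cuts_sections :: "'a::euclidean_space set \<Rightarrow> 'a \<Rightarrow> 'a set \<Rightarrow> bool" where
  "cuts_sections K \<nu> W \<longleftrightarrow> (\<forall>c. \<exists>c'. (\<forall>w\<in>W. inner c' w = inner c w) \<and>
     (\<forall>y. inner \<nu> (y - c') = 0 \<longrightarrow> (\<forall>w\<in>W. inner w y \<le> support_fun K w) \<longrightarrow> y \<in> K))"

lemma cuts_sections_sphere: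
  fixes K :: "'a::euclidean_space set"
  assumes "compact K" "convex K" "K \<noteq> {}"
  shows "cuts_sections K \<nu> (sphere 0 1)"
  unfolding cuts_sections_def
proof (intro allI exI conjI)
  fix c y :: 'a
  show "\<forall>w\<in>sphere 0 1. inner c w = inner c w" by simp
  show "inner \<nu> (y - c) = 0 \<longrightarrow> (\<forall>w\<in>sphere 0 1. inner w y \<le> support_fun K w) \<longrightarrow> y \<in> K"
  proof (intro impI, rule ccontr)
    assume "\<forall>w\<in>sphere 0 1. inner w y \<le> support_fun K w" "y \<notin> K"
    moreover obtain w where "support_fun K w < inner w y"
      using exists_support_fun_less[OF assms \<open>y \<notin> K\<close>] .
    hence "sgn w \<in> sphere 0 1" "support_fun K (sgn w) < inner (sgn w) y"
      using support_fun_less_sgn[OF assms(1,3)] by simp_all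
    ultimately show False by fastforce
  qed
qed

lemma cuts_sections_flat:
  fixes K :: "'a::euclidean_space set"
  assumes "compact K" "convex K" "K \<noteq> {}" "norm \<nu> = 1" "\<And>x. x \<in> K \<Longrightarrow> inner \<nu> x = b"
  shows "cuts_sections K \<nu> (sphere 0 1 \<inter> {w. inner \<nu> w = 0})"
  unfolding cuts_sections_def
proof (intro allI)
  fix c
  let ?W = "sphere 0 1 \<inter> {w. inner \<nu> w = 0}"
  define c' where "c' = c + (b - inner \<nu> c) *\<^sub>R \<nu>"
  have "\<forall>w\<in>?W. inner c' w = inner c w" by (auto simp: c'_def inner_add_left)
  moreover have "y \<in> K" if y: "inner \<nu> (y - c') = 0" "\<forall>w\<in>?W. inner w y \<le> support_fun K w" for y
  proof (rule ccontr)
    assume "y \<notin> K"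
    then obtain a where a: "support_fun K a < inner a y"
      using exists_support_fun_less[OF assms(1-3)] by blast
    define p where "p = perp_proj \<nu> a"
    have on_hyperplane: "inner a z = inner p z + inner a \<nu> * b" if "inner \<nu> z = b" for z
      using inner_perp_proj_split[of a z \<nu>] that unfolding p_def by simp
    have "inner \<nu> y = b"
      using y(1) assms(4) by (simp add: c'_def inner_diff_right inner_add_right norm_eq_1)
    moreover obtain x where x: "x \<in> K" "inner p x = support_fun K p"
      using support_fun_attained[OF assms(1,3)] .
    ultimately have "support_fun K p < inner p y"
      using a support_fun_ge[OF assms(1) x(1), of a] on_hyperplane[OF assms(5)[OF x(1)]]
        on_hyperplane[of y] by simp
    hence "sgn p \<in> sphere 0 1" "support_fun K (sgn p) < inner (sgn p) y"
      using support_fun_less_sgn[OF assms(1,3)] by simp_all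
    moreover have "inner \<nu> (sgn p) = 0"
      using inner_perp_proj_unit[OF assms(4)] by (simp add: p_def sgn_div_norm)
    ultimately have "inner (sgn p) y \<le> support_fun K (sgn p)" using y(2) by blast
    thus False using \<open>support_fun K (sgn p) < inner (sgn p) y\<close> by linarith
  qed
  ultimately show "\<exists>c'. (\<forall>w\<in>?W. inner c' w = inner c w) \<and>
     (\<forall>y. inner \<nu> (y - c') = 0 \<longrightarrow> (\<forall>w\<in>?W. inner w y \<le> support_fun K w) \<longrightarrow> y \<in> K)"
    by blast
qed

lemma exists_cutting_directions:
  fixes K :: "'a::euclidean_space set"
  assumes K: "compact K" "convex K" "K \<noteq> {}" and "DIM('a) \<ge> 2" "norm \<nu> = 1"
  obtains W e where "compact W" "W \<subseteq> sphere 0 1" "e \<in> W" "- e \<in> W" "cuts_sections K \<nu> W"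
    "width K \<nu> = 0 \<Longrightarrow> \<forall>w\<in>W. inner \<nu> w = 0"
proof -
  obtain e where e: "norm e = 1" "inner \<nu> e = 0" using exists_unit_orthogonal[OF assms(4,5)] .
  show ?thesis
  proof (cases "width K \<nu> = 0")
    case True
    have "inner \<nu> x = support_fun K \<nu>" if "x \<in> K" for x
      using True support_fun_ge[OF K(1) that, of \<nu>] support_fun_ge[OF K(1) that, of "- \<nu>"]
      unfolding width_def by simp
    hence "cuts_sections K \<nu> (sphere 0 1 \<inter> {w. inner \<nu> w = 0})"
      by (rule cuts_sections_flat[OF K assms(5)])
    thus ?thesis
      using that[of "sphere 0 1 \<inter> {w. inner \<nu> w = 0}" e] e
      by (simp add: compact_Int_closed closed_hyperplane)
  next
    case False
    thus ?thesis using that[OF compact_sphere _ _ _ cuts_sections_sphere[OF K]] e by simp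
  qed
qed

lemma section_ball_subset_of_support_margin:
  fixes K :: "'a::euclidean_space set"
  assumes "norm \<nu> = 1" "W \<subseteq> sphere 0 1" "\<delta> \<ge> 0"
    and same_on_W: "\<forall>w\<in>W. inner c' w = inner c w"
    and cut: "\<forall>y. inner \<nu> (y - c') = 0 \<longrightarrow> (\<forall>w\<in>W. inner w y \<le> support_fun K w) \<longrightarrow> y \<in> K"
    and margin: "\<forall>w\<in>W. inner c w + \<delta> \<le> support_fun K w - r * norm (perp_proj \<nu> w)"
  shows "section_ball \<nu> c' (r + \<delta>) \<subseteq> K"
proof
  fix y assume "y \<in> section_ball \<nu> c' (r + \<delta>)"
  hence y: "inner \<nu> (y - c') = 0" "norm (y - c') \<le> r + \<delta>" by (simp_all add: section_ball_def)
  have "inner w y \<le> support_fun K w" if w: "w \<in> W" for w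
  proof -
    have p: "0 \<le> norm (perp_proj \<nu> w)" "norm (perp_proj \<nu> w) \<le> 1"
      using norm_perp_proj_le[OF assms(1), of w] w assms(2) by auto
    have "inner w y = inner c' w + inner w (y - c')" by (simp add: inner_diff_right inner_commute)
    also have "inner c' w = inner c w" using same_on_W w by blast
    also have "inner w (y - c') = inner (perp_proj \<nu> w) (y - c')"
      using inner_perp_proj_split[of w "y - c'" \<nu>] y(1) by simp
    also have "inner (perp_proj \<nu> w) (y - c') \<le> norm (perp_proj \<nu> w) * (r + \<delta>)"
      using norm_cauchy_schwarz[of "perp_proj \<nu> w" "y - c'"] mult_left_mono[OF y(2) p(1)] by linarith
    also have "\<dots> \<le> r * norm (perp_proj \<nu> w) + \<delta>"
      using mult_right_mono[OF p(2) assms(3)] by (simp add: algebra_simps)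
    finally show ?thesis using margin w by force
  qed
  thus "y \<in> K" using cut y(1) by blast
qed

section \<open>A balanced family of directions\<close>

lemma exists_affine_minorant_of_convex_hull_graph:
  fixes g :: "'a::euclidean_space \<Rightarrow> real"
  assumes "compact W" "continuous_on W g" "w0 \<in> W" "- w0 \<in> W"
    and "\<not> (\<exists>q\<in>convex hull ((\<lambda>w. (w, g w)) ` W). fst q = 0 \<and> snd q \<le> 0)"
  obtains c \<delta> where "0 < \<delta>" "\<forall>w\<in>W. inner c w + \<delta> \<le> g w"
proof -
  define G where "G = (\<lambda>w. (w, g w)) ` W"
  define T where "T = {0::'a} \<times> {..0::real}"
  have disjoint: "T \<inter> convex hull G = {}" using assms(5) unfolding T_def G_def by auto
  have "convex T" "closed T" unfolding T_def by (auto intro: closed_Times convex_Times)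
  have "compact G" unfolding G_def by (intro compact_continuous_image assms(1,2) continuous_intros)
  have "convex hull G \<noteq> {}" using assms(3) unfolding G_def by auto
  obtain a b where sep: "\<forall>z\<in>T. inner a z < b" "\<forall>z\<in>convex hull G. b < inner a z"
    using separating_hyperplane_closed_compact[OF \<open>convex T\<close> \<open>closed T\<close> convex_convex_hull
        compact_convex_hull[OF \<open>compact G\<close>] \<open>convex hull G \<noteq> {}\<close> disjoint] by blast
  obtain a1 \<alpha> where a: "a = (a1, \<alpha>)" by fastforce
  have below: "\<alpha> * t < b" if "t \<le> 0" for t using sep(1) that unfolding T_def a by auto
  have above: "b < inner a1 w + \<alpha> * g w" if "w \<in> W" for w
  proof -
    have "(w, g w) \<in> convex hull G" using that unfolding G_def by (intro hull_inc) blast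
    thus ?thesis using sep(2) unfolding a by auto
  qed
  have "0 < b" using below[of 0] by simp
  have "0 \<le> \<alpha>"
  proof (rule ccontr)
    assume "\<not> 0 \<le> \<alpha>"
    hence "b / \<alpha> \<le> 0" using \<open>0 < b\<close> by (simp add: divide_pos_neg less_imp_le)
    thus False using below[of "b / \<alpha>"] \<open>\<not> 0 \<le> \<alpha>\<close> by simp
  qed
  moreover have "\<alpha> \<noteq> 0" using above[OF assms(3)] above[OF assms(4)] \<open>0 < b\<close> by auto
  ultimately have "0 < \<alpha>" by simp
  have "inner (- (1 / \<alpha>) *\<^sub>R a1) w + b / \<alpha> \<le> g w" if "w \<in> W" for w
  proof -
    have "b / \<alpha> \<le> (inner a1 w + \<alpha> * g w) / \<alpha>"
      using above[OF that] \<open>0 < \<alpha>\<close> by (simp add: divide_right_mono)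
    thus ?thesis using \<open>0 < \<alpha>\<close> by (simp add: field_simps)
  qed
  moreover have "0 < b / \<alpha>" using \<open>0 < b\<close> \<open>0 < \<alpha>\<close> by simp
  ultimately show ?thesis using that by blast
qed

lemma convex_hull_graph_meets_lower_axis:
  fixes K :: "'a::euclidean_space set"
  assumes K: "compact K" "K \<noteq> {}" and \<nu>: "norm \<nu> = 1"
    and W: "compact W" "W \<subseteq> sphere 0 1" "w0 \<in> W" "- w0 \<in> W"
    and cuts: "cuts_sections K \<nu> W"
    and max: "\<And>c \<rho>. \<rho> \<ge> 0 \<Longrightarrow> section_ball \<nu> c \<rho> \<subseteq> K \<Longrightarrow> \<rho> \<le> r"
  obtains q where "q \<in> convex hull ((\<lambda>w. (w, support_fun K w - r * norm (perp_proj \<nu> w))) ` W)"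
    "fst q = 0" "snd q \<le> 0"
proof -
  have "\<exists>q\<in>convex hull ((\<lambda>w. (w, support_fun K w - r * norm (perp_proj \<nu> w))) ` W).
          fst q = 0 \<and> snd q \<le> 0"
  proof (rule ccontr)
    assume no_point: "\<not> ?thesis"
    have "continuous_on W (\<lambda>w. support_fun K w - r * norm (perp_proj \<nu> w))"
      unfolding perp_proj_def by (intro continuous_intros continuous_on_support_fun[OF K])
    then obtain c \<delta> where "0 < \<delta>" "\<forall>w\<in>W. inner c w + \<delta> \<le> support_fun K w - r * norm (perp_proj \<nu> w)"
      using exists_affine_minorant_of_convex_hull_graph[OF W(1) _ W(3,4) no_point] by blast
    \<comment> \<open>an affine minorant with margin \<delta> lets a section ball of radius r + \<delta> fit into K\<close>
    moreover obtain c' where "\<forall>w\<in>W. inner c' w = inner c w"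
      "\<forall>y. inner \<nu> (y - c') = 0 \<longrightarrow> (\<forall>w\<in>W. inner w y \<le> support_fun K w) \<longrightarrow> y \<in> K"
      using cuts unfolding cuts_sections_def by blast
    ultimately have "section_ball \<nu> c' (r + \<delta>) \<subseteq> K"
      using section_ball_subset_of_support_margin[OF \<nu> W(2) less_imp_le[OF \<open>0 < \<delta>\<close>]] by blast
    moreover obtain k where "k \<in> K" using K(2) by blast
    hence "section_ball \<nu> k 0 \<subseteq> K" by (auto simp: section_ball_def)
    hence "0 \<le> r" using max[of 0 k] by simp
    ultimately have "r + \<delta> \<le> r" using \<open>0 < \<delta>\<close> by (intro max) simp_all
    thus False using \<open>0 < \<delta>\<close> by simp
  qed
  thus ?thesis using that by blast
qed

lemma exists_weights_of_convex_hull_graph: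
  fixes g :: "'a::euclidean_space \<Rightarrow> real"
  assumes "q \<in> convex hull ((\<lambda>w. (w, g w)) ` W)" "fst q = 0" "snd q \<le> 0"
  obtains S u where "finite S" "S \<subseteq> W" "card S \<le> DIM('a) + 2" "\<forall>w\<in>S. 0 \<le> u w" "sum u S = 1"
    "(\<Sum>w\<in>S. u w *\<^sub>R w) = 0" "(\<Sum>w\<in>S. u w * g w) \<le> 0"
proof -
  obtain S' where S': "finite S'" "S' \<subseteq> (\<lambda>w. (w, g w)) ` W" "card S' \<le> DIM('a \<times> real) + 1"
      "q \<in> convex hull S'"
    using caratheodory[of "(\<lambda>w. (w, g w)) ` W"] assms(1) by blast
  then obtain u' where u': "\<forall>z\<in>S'. 0 \<le> u' z" "sum u' S' = 1" "(\<Sum>z\<in>S'. u' z *\<^sub>R z) = q"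
    using convex_hull_finite[OF S'(1)] by blast
  define S where "S = fst ` S'"
  define u where "u w = u' (w, g w)" for w
  have graph: "z = (fst z, g (fst z))" if "z \<in> S'" for z using S'(2) that by auto
  have inj: "inj_on fst S'" by (rule inj_onI) (metis graph)
  have reindex: "(\<Sum>w\<in>S. f w) = (\<Sum>z\<in>S'. f (fst z))" for f :: "'a \<Rightarrow> 'b::comm_monoid_add"
    unfolding S_def by (rule sum.reindex[OF inj, unfolded comp_def])
  have u_fst: "u (fst z) = u' z" if "z \<in> S'" for z using graph[OF that] unfolding u_def by metis
  have "(\<Sum>z\<in>S'. u' z *\<^sub>R fst z) = 0" "(\<Sum>z\<in>S'. u' z * snd z) \<le> 0"
    using assms(2,3) u'(3) by (auto simp: fst_sum snd_sum)
  moreover have "(\<Sum>z\<in>S'. u' z * snd z) = (\<Sum>z\<in>S'. u' z * g (fst z))"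
    by (rule sum.cong) (auto dest: graph)
  ultimately have "(\<Sum>z\<in>S'. u' z *\<^sub>R fst z) = 0" "(\<Sum>z\<in>S'. u' z * g (fst z)) \<le> 0"
    by simp_all
  show ?thesis
  proof (rule that)
    show "finite S" "S \<subseteq> W" using S'(1,2) unfolding S_def by auto
    show "card S \<le> DIM('a) + 2" using S'(3) card_image_le[OF S'(1), of fst] unfolding S_def by simp
    show "\<forall>w\<in>S. 0 \<le> u w" using u'(1) u_fst unfolding S_def by auto
    show "sum u S = 1" using u'(2) u_fst by (simp add: reindex)
    show "(\<Sum>w\<in>S. u w *\<^sub>R w) = 0" using \<open>(\<Sum>z\<in>S'. u' z *\<^sub>R fst z) = 0\<close> u_fst by (simp add: reindex)
    show "(\<Sum>w\<in>S. u w * g w) \<le> 0" using \<open>(\<Sum>z\<in>S'. u' z * g (fst z)) \<le> 0\<close> u_fst by (simp add: reindex)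
  qed
qed

lemma sum_support_gap:
  assumes "(\<Sum>w\<in>S. u w *\<^sub>R w) = 0"
  shows "(\<Sum>w\<in>S. u w * (support_fun K w - inner w x)) = (\<Sum>w\<in>S. u w * support_fun K w)"
proof -
  have "(\<Sum>w\<in>S. u w * inner w x) = inner (\<Sum>w\<in>S. u w *\<^sub>R w) x" by (simp add: inner_sum_left)
  thus ?thesis using assms by (simp add: right_diff_distrib sum_subtractf)
qed

lemma support_fun_attained_everywhere:
  fixes K :: "'a::euclidean_space set"
  assumes "compact K" "finite S" "\<forall>w\<in>S. 0 \<le> u w" "(\<Sum>w\<in>S. u w *\<^sub>R w) = 0"
    and "(\<Sum>w\<in>S. u w * support_fun K w) \<le> 0" "w0 \<in> S" "0 < u w0" "x \<in> K"
  shows "inner w0 x = support_fun K w0"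
proof -
  have gaps: "\<forall>w\<in>S. 0 \<le> u w * (support_fun K w - inner w x)"
    using assms(3) support_fun_ge[OF assms(1,8)] by simp
  hence "0 \<le> (\<Sum>w\<in>S. u w * (support_fun K w - inner w x))" by (simp add: sum_nonneg)
  hence "(\<Sum>w\<in>S. u w * (support_fun K w - inner w x)) = 0"
    using sum_support_gap[OF assms(4)] assms(5) by simp
  hence "\<forall>w\<in>S. u w * (support_fun K w - inner w x) = 0"
    using sum_nonneg_eq_0_iff[OF assms(2), of "\<lambda>w. u w * (support_fun K w - inner w x)"] gaps by blast
  thus ?thesis using assms(6,7) by force
qed

lemma perp_mass_pos:
  fixes K :: "'a::euclidean_space set"
  assumes K: "compact K" "K \<noteq> {}" and \<nu>: "norm \<nu> = 1"
    and S: "finite S" "S \<subseteq> sphere 0 1" "\<forall>w\<in>S. 0 \<le> u w" "sum u S = 1" "(\<Sum>w\<in>S. u w *\<^sub>R w) = 0"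
    and support: "(\<Sum>w\<in>S. u w * support_fun K w) \<le> r * (\<Sum>w\<in>S. u w * norm (perp_proj \<nu> w))"
    and flat: "width K \<nu> = 0 \<Longrightarrow> \<forall>w\<in>S. inner \<nu> w = 0"
  shows "0 < (\<Sum>w\<in>S. u w * norm (perp_proj \<nu> w))"
proof (rule ccontr)
  \<comment> \<open>if \<Lambda> = 0 then the weight sits on multiples of \<nu>, and the support equalities force
    K to be flat in direction \<nu>\<close>
  have nonneg: "\<forall>w\<in>S. 0 \<le> u w * norm (perp_proj \<nu> w)" using S(3) by simp
  hence "0 \<le> (\<Sum>w\<in>S. u w * norm (perp_proj \<nu> w))" by (simp add: sum_nonneg)
  moreover assume "\<not> ?thesis"
  ultimately have mass_zero: "(\<Sum>w\<in>S. u w * norm (perp_proj \<nu> w)) = 0" by simp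
  hence zero: "\<forall>w\<in>S. u w * norm (perp_proj \<nu> w) = 0"
    using sum_nonneg_eq_0_iff[OF S(1), of "\<lambda>w. u w * norm (perp_proj \<nu> w)"] nonneg by blast
  have "\<exists>w0\<in>S. 0 < u w0"
  proof (rule ccontr)
    assume "\<not> (\<exists>w0\<in>S. 0 < u w0)"
    hence "sum u S \<le> 0" by (intro sum_nonpos) (simp add: not_less)
    thus False using S(4) by simp
  qed
  then obtain w0 where w0: "w0 \<in> S" "0 < u w0" by blast
  define t where "t = inner w0 \<nu>"
  have "perp_proj \<nu> w0 = 0" using zero w0 by force
  hence w0_eq: "w0 = t *\<^sub>R \<nu>" by (simp add: perp_proj_def t_def)
  have "norm w0 = 1" using S(2) w0(1) by auto
  hence "t \<noteq> 0" using w0_eq by auto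
  have "t * inner \<nu> x = support_fun K w0" if "x \<in> K" for x
    using support_fun_attained_everywhere[OF K(1) S(1,3,5) _ w0 that] support mass_zero
    by (simp add: w0_eq)
  moreover obtain x y where "x \<in> K" "y \<in> K" "width K \<nu> = inner \<nu> (x - y)"
    using width_attained[OF K] .
  ultimately have "t * width K \<nu> = 0" by (simp add: inner_diff_right right_diff_distrib)
  hence "inner \<nu> w0 = 0" using flat w0(1) \<open>t \<noteq> 0\<close> by simp
  thus False using \<open>t \<noteq> 0\<close> \<nu> by (simp add: w0_eq norm_eq_1)
qed

lemma exists_signs_sum_norm_sq_le:
  fixes f :: "'b \<Rightarrow> 'a::real_inner"
  assumes "finite S"
  shows "\<exists>\<epsilon>. (\<forall>z. \<epsilon> z = 1 \<or> \<epsilon> z = -1) \<and>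
     (\<Sum>z\<in>S. (norm (f z))\<^sup>2) \<le> (norm (\<Sum>z\<in>S. \<epsilon> z *\<^sub>R f z))\<^sup>2"
  using assms
proof (induction S rule: finite_induct)
  case empty
  show ?case by (rule exI[of _ "\<lambda>_. 1"]) simp
next
  case (insert x F)
  then obtain \<epsilon> where e: "\<forall>z. \<epsilon> z = 1 \<or> \<epsilon> z = -1"
     "(\<Sum>z\<in>F. (norm (f z))\<^sup>2) \<le> (norm (\<Sum>z\<in>F. \<epsilon> z *\<^sub>R f z))\<^sup>2" by blast
  define s where "s = (\<Sum>z\<in>F. \<epsilon> z *\<^sub>R f z)"
  define \<sigma> :: real where "\<sigma> = (if inner s (f x) \<ge> 0 then 1 else -1)"
  define \<epsilon>' where "\<epsilon>' = \<epsilon>(x := \<sigma>)"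
  have s': "(\<Sum>z\<in>F. \<epsilon>' z *\<^sub>R f z) = s" unfolding s_def \<epsilon>'_def
    using insert(2) by (intro sum.cong) auto
  have sig: "\<sigma> * inner s (f x) \<ge> 0" "\<sigma> * \<sigma> = 1" unfolding \<sigma>_def by auto
  have "(norm (s + \<sigma> *\<^sub>R f x))\<^sup>2 = (norm s)\<^sup>2 + 2 * (\<sigma> * inner s (f x)) + \<sigma> * \<sigma> * (norm (f x))\<^sup>2"
    unfolding power2_norm_eq_inner by (simp add: inner_add_left inner_add_right inner_commute algebra_simps)
  hence "(norm (s + \<sigma> *\<^sub>R f x))\<^sup>2 \<ge> (norm s)\<^sup>2 + (norm (f x))\<^sup>2" using sig by simp
  moreover have "(\<Sum>z\<in>insert x F. \<epsilon>' z *\<^sub>R f z) = \<sigma> *\<^sub>R f x + s"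
    using insert(1,2) s' by (simp add: \<epsilon>'_def)
  moreover have "(\<Sum>z\<in>insert x F. (norm (f z))\<^sup>2) = (norm (f x))\<^sup>2 + (\<Sum>z\<in>F. (norm (f z))\<^sup>2)"
    using insert(1,2) by simp
  moreover have "\<forall>z. \<epsilon>' z = 1 \<or> \<epsilon>' z = -1" using e(1) unfolding \<epsilon>'_def \<sigma>_def by auto
  ultimately show ?case using e(2) unfolding s_def[symmetric]
    by (intro exI[of _ \<epsilon>']) (simp add: add.commute)
qed

lemma width_le_of_signed_combination:
  fixes K :: "'a::euclidean_space set"
  assumes K: "compact K" "K \<noteq> {}"
    and "\<forall>w\<in>S. 0 \<le> u w" "(\<Sum>w\<in>S. u w *\<^sub>R w) = 0" "\<forall>w. \<epsilon> w = 1 \<or> \<epsilon> w = -1"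
  shows "width K ((1/2) *\<^sub>R (\<Sum>w\<in>S. (\<epsilon> w * u w) *\<^sub>R w)) \<le> (\<Sum>w\<in>S. u w * support_fun K w)"
proof -
  let ?v = "(1/2) *\<^sub>R (\<Sum>w\<in>S. (\<epsilon> w * u w) *\<^sub>R w)"
  obtain x y where "x \<in> K" "y \<in> K" and width: "width K ?v = inner ?v (x - y)"
    using width_attained[OF K] .
  define A where "A w = u w * (support_fun K w - inner w y)" for w
  define B where "B w = u w * (support_fun K w - inner w x)" for w
  have "inner ?v (x - y) = (1/2) * (\<Sum>w\<in>S. \<epsilon> w * (A w - B w))"
    unfolding A_def B_def inner_scaleR_left inner_sum_left
    by (simp add: sum_distrib_left inner_diff_right algebra_simps)
  also have "\<dots> \<le> (1/2) * (\<Sum>w\<in>S. A w + B w)"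
  proof (intro mult_left_mono sum_mono)
    fix w assume "w \<in> S"
    hence "0 \<le> A w" "0 \<le> B w" unfolding A_def B_def
      using assms(3) support_fun_ge[OF K(1)] \<open>x \<in> K\<close> \<open>y \<in> K\<close> by auto
    thus "\<epsilon> w * (A w - B w) \<le> A w + B w" using assms(5)[rule_format, of w] by auto
  qed simp
  also have "\<dots> = (\<Sum>w\<in>S. u w * support_fun K w)"
    using sum_support_gap[OF assms(4)] unfolding A_def B_def sum.distrib by simp
  finally show ?thesis by (simp only: width)
qed

lemma exists_width_bounded_direction:
  fixes K :: "'a::euclidean_space set" and f :: "'a \<Rightarrow> 'b::real_inner"
  assumes "compact K" "K \<noteq> {}" "linear f"
    and "finite S" "\<forall>w\<in>S. 0 \<le> u w" "(\<Sum>w\<in>S. u w *\<^sub>R w) = 0"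
  obtains v where "width K v \<le> (\<Sum>w\<in>S. u w * support_fun K w)"
    "(\<Sum>w\<in>S. u w * norm (f w))\<^sup>2 \<le> 4 * card S * (norm (f v))\<^sup>2"
proof -
  obtain \<epsilon> where \<epsilon>: "\<forall>w. \<epsilon> w = 1 \<or> \<epsilon> w = -1"
    "(\<Sum>w\<in>S. (norm (u w *\<^sub>R f w))\<^sup>2) \<le> (norm (\<Sum>w\<in>S. \<epsilon> w *\<^sub>R (u w *\<^sub>R f w)))\<^sup>2"
    using exists_signs_sum_norm_sq_le[OF assms(4), of "\<lambda>w. u w *\<^sub>R f w"] by blast
  define v where "v = (1/2) *\<^sub>R (\<Sum>w\<in>S. (\<epsilon> w * u w) *\<^sub>R w)"
  have fv: "f v = (1/2) *\<^sub>R (\<Sum>w\<in>S. \<epsilon> w *\<^sub>R (u w *\<^sub>R f w))"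
    unfolding v_def using assms(3) by (simp add: linear_scale linear_sum)
  have "(\<Sum>w\<in>S. u w * norm (f w))\<^sup>2 \<le> card S * (\<Sum>w\<in>S. (u w * norm (f w))\<^sup>2)"
    using Cauchy_Schwarz_ineq_sum[of "\<lambda>w. u w * norm (f w)" "\<lambda>_. 1" S] by (simp add: mult.commute)
  also have "(\<Sum>w\<in>S. (u w * norm (f w))\<^sup>2) = (\<Sum>w\<in>S. (norm (u w *\<^sub>R f w))\<^sup>2)"
    using assms(5) by (intro sum.cong) auto
  also have "\<dots> \<le> 4 * (norm (f v))\<^sup>2" using \<epsilon>(2) by (simp add: fv power2_eq_square)
  finally have "(\<Sum>w\<in>S. u w * norm (f w))\<^sup>2 \<le> 4 * card S * (norm (f v))\<^sup>2"
    by (simp add: mult_left_mono)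
  moreover have "width K v \<le> (\<Sum>w\<in>S. u w * support_fun K w)"
    unfolding v_def by (rule width_le_of_signed_combination[OF assms(1,2,5,6) \<epsilon>(1)])
  ultimately show ?thesis using that by blast
qed

lemma exists_transverse_direction_of_small_width:
  fixes K :: "'a::euclidean_space set"
  assumes K: "compact K" "convex K" "K \<noteq> {}" and "DIM('a) \<ge> 2" and \<nu>: "norm \<nu> = 1"
    and max: "\<And>c \<rho>. \<rho> \<ge> 0 \<Longrightarrow> section_ball \<nu> c \<rho> \<subseteq> K \<Longrightarrow> \<rho> \<le> r"
  obtains v \<Lambda> where "0 < \<Lambda>" "width K v \<le> r * \<Lambda>"
    "\<Lambda>\<^sup>2 \<le> 8 * real DIM('a) * (norm (perp_proj \<nu> v))\<^sup>2"
proof -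
  obtain W e where W: "compact W" "W \<subseteq> sphere 0 1" "e \<in> W" "- e \<in> W" "cuts_sections K \<nu> W"
    and flat: "width K \<nu> = 0 \<Longrightarrow> \<forall>w\<in>W. inner \<nu> w = 0"
    using exists_cutting_directions[OF K assms(4) \<nu>] by blast
  obtain q where "q \<in> convex hull ((\<lambda>w. (w, support_fun K w - r * norm (perp_proj \<nu> w))) ` W)"
      "fst q = 0" "snd q \<le> 0"
    by (rule convex_hull_graph_meets_lower_axis[OF K(1,3) \<nu> W max])
  then obtain S u where S: "finite S" "S \<subseteq> W" "card S \<le> DIM('a) + 2" "\<forall>w\<in>S. 0 \<le> u w"
      "sum u S = 1" "(\<Sum>w\<in>S. u w *\<^sub>R w) = 0"
      "(\<Sum>w\<in>S. u w * (support_fun K w - r * norm (perp_proj \<nu> w))) \<le> 0"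
    by (rule exists_weights_of_convex_hull_graph)
  define H where "H = (\<Sum>w\<in>S. u w * support_fun K w)"
  define \<Lambda> where "\<Lambda> = (\<Sum>w\<in>S. u w * norm (perp_proj \<nu> w))"
  have "(\<Sum>w\<in>S. u w * (support_fun K w - r * norm (perp_proj \<nu> w))) = H - r * \<Lambda>"
    by (simp add: H_def \<Lambda>_def sum_subtractf sum_distrib_left right_diff_distrib mult.left_commute)
  hence "H \<le> r * \<Lambda>" using S(7) by simp
  have "0 < \<Lambda>" unfolding \<Lambda>_def
  proof (rule perp_mass_pos[OF K(1,3) \<nu> S(1) _ S(4-6)])
    show "S \<subseteq> sphere 0 1" using S(2) W(2) by blast
    show "width K \<nu> = 0 \<Longrightarrow> \<forall>w\<in>S. inner \<nu> w = 0" using S(2) flat by blast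
  qed (use \<open>H \<le> r * \<Lambda>\<close> in \<open>simp add: H_def \<Lambda>_def\<close>)
  obtain v where "width K v \<le> H" and sq: "\<Lambda>\<^sup>2 \<le> 4 * card S * (norm (perp_proj \<nu> v))\<^sup>2"
    using exists_width_bounded_direction[OF K(1,3) linear_perp_proj S(1,4,6)] unfolding H_def \<Lambda>_def .
  have "card S \<le> 2 * DIM('a)" using S(3) assms(4) by linarith
  hence "4 * real (card S) * (norm (perp_proj \<nu> v))\<^sup>2 \<le> 8 * real DIM('a) * (norm (perp_proj \<nu> v))\<^sup>2"
    by (intro mult_right_mono) simp_all
  hence "\<Lambda>\<^sup>2 \<le> 8 * real DIM('a) * (norm (perp_proj \<nu> v))\<^sup>2" using sq by linarith
  moreover have "width K v \<le> r * \<Lambda>" using \<open>width K v \<le> H\<close> \<open>H \<le> r * \<Lambda>\<close> by linarith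
  ultimately show ?thesis by (intro that[OF \<open>0 < \<Lambda>\<close>])
qed

section \<open>Projection onto a plane\<close>

lemma sum_sq_le_of_two_strips:
  fixes d1 d2 s t W H :: real
  assumes "0 < s" "0 \<le> W" "\<bar>d1\<bar> \<le> W / 2" "\<bar>s * d2 + t * d1\<bar> \<le> H / 2"
    and "W\<^sup>2 * (s\<^sup>2 + t\<^sup>2) \<le> H\<^sup>2"
  shows "d1\<^sup>2 + d2\<^sup>2 \<le> (H / s)\<^sup>2"
proof -
  have "0 \<le> H" using assms(4) by linarith
  have "\<bar>t\<bar> * W \<le> H"
  proof (rule power2_le_imp_le)
    have "(\<bar>t\<bar> * W)\<^sup>2 = W\<^sup>2 * t\<^sup>2" by (simp add: power_mult_distrib)
    also have "\<dots> \<le> W\<^sup>2 * (s\<^sup>2 + t\<^sup>2)" by (intro mult_left_mono) simp_all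
    finally show "(\<bar>t\<bar> * W)\<^sup>2 \<le> H\<^sup>2" using assms(5) by linarith
  qed fact
  have "\<bar>s * d2\<bar> \<le> \<bar>s * d2 + t * d1\<bar> + \<bar>t * d1\<bar>" by linarith
  also have "\<bar>t * d1\<bar> \<le> \<bar>t\<bar> * (W / 2)" unfolding abs_mult by (rule mult_left_mono) (use assms(3) in auto)
  finally have "\<bar>s * d2\<bar> \<le> H / 2 + \<bar>t\<bar> * W / 2" using assms(4) by simp
  hence "(s * d2)\<^sup>2 \<le> (H / 2 + \<bar>t\<bar> * W / 2)\<^sup>2" by (metis abs_ge_zero power2_abs power_mono)
  moreover have "s\<^sup>2 * d1\<^sup>2 \<le> s\<^sup>2 * (W / 2)\<^sup>2"
    using assms(3) by (intro mult_left_mono) (simp_all add: abs_le_square_iff[symmetric] abs_of_nonneg assms(2))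
  moreover have "s\<^sup>2 * (d1\<^sup>2 + d2\<^sup>2) = s\<^sup>2 * d1\<^sup>2 + (s * d2)\<^sup>2" by (simp add: algebra_simps power_mult_distrib)
  ultimately have "s\<^sup>2 * (d1\<^sup>2 + d2\<^sup>2) \<le> s\<^sup>2 * (W / 2)\<^sup>2 + (H / 2 + \<bar>t\<bar> * W / 2)\<^sup>2" by linarith
  also have "\<dots> = (W\<^sup>2 * (s\<^sup>2 + t\<^sup>2) + H\<^sup>2 + 2 * H * (\<bar>t\<bar> * W)) / 4"
    by (simp add: power2_eq_square algebra_simps)
  also have "\<dots> \<le> (H\<^sup>2 + H\<^sup>2 + 2 * H * H) / 4"
    using assms(5) \<open>\<bar>t\<bar> * W \<le> H\<close> \<open>0 \<le> H\<close> by (intro divide_right_mono add_mono mult_left_mono) auto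
  also have "\<dots> = s\<^sup>2 * (H / s)\<^sup>2" using assms(1) by (simp add: power2_eq_square field_simps)
  finally show ?thesis using assms(1) by simp
qed

lemma planar_projection_subset_cball:
  fixes K :: "'a::euclidean_space set"
  assumes K: "compact K" "K \<noteq> {}" and \<nu>: "norm \<nu> = 1" and e: "norm e = 1" "inner \<nu> e = 0"
    and v: "v = t *\<^sub>R \<nu> + s *\<^sub>R e" and "0 < s" and widths: "width K \<nu> * norm v \<le> width K v"
  obtains z where "z \<in> span {\<nu>, e}" "orth_proj (span {\<nu>, e}) ` K \<subseteq> cball z (width K v / s)"
proof -
  define W where "W = width K \<nu>"
  define H where "H = width K v"
  have "0 \<le> W" "0 \<le> H" unfolding W_def H_def using width_nonneg[OF K] by auto
  have "W\<^sup>2 * (s\<^sup>2 + t\<^sup>2) \<le> H\<^sup>2"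
  proof -
    have "(W * norm v)\<^sup>2 \<le> H\<^sup>2" using widths \<open>0 \<le> W\<close> by (simp add: W_def H_def power_mono)
    moreover have "(norm v)\<^sup>2 = t\<^sup>2 + s\<^sup>2" by (subst v) (rule norm_orthonormal_pair_combination[OF \<nu> e])
    ultimately show ?thesis by (simp add: power_mult_distrib add.commute)
  qed
  \<comment> \<open>the projection lies in the strips of widths W and H normal to \<nu> and v; z is the
    intersection of their midlines\<close>
  define m1 where "m1 = (support_fun K \<nu> - support_fun K (- \<nu>)) / 2"
  define m2 where "m2 = (support_fun K v - support_fun K (- v)) / 2"
  define z where "z = m1 *\<^sub>R \<nu> + ((m2 - t * m1) / s) *\<^sub>R e"
  have "orth_proj (span {\<nu>, e}) ` K \<subseteq> cball z (H / s)"
  proof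
    fix q assume "q \<in> orth_proj (span {\<nu>, e}) ` K"
    then obtain x where x: "x \<in> K" "q = orth_proj (span {\<nu>, e}) x" by blast
    define d1 where "d1 = inner x \<nu> - m1"
    define d2 where "d2 = inner x e - (m2 - t * m1) / s"
    have "q - z = d1 *\<^sub>R \<nu> + d2 *\<^sub>R e"
      unfolding x(2) orth_proj_span_orthonormal_pair[OF \<nu> e] d1_def d2_def z_def
      by (simp add: algebra_simps)
    hence dist: "(dist z q)\<^sup>2 = d1\<^sup>2 + d2\<^sup>2"
      using norm_orthonormal_pair_combination[OF \<nu> e] by (simp add: dist_norm norm_minus_commute)
    have "\<bar>d1\<bar> \<le> W / 2"
      using support_fun_ge[OF K(1) x(1), of \<nu>] support_fun_ge[OF K(1) x(1), of "- \<nu>"]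
      unfolding d1_def m1_def W_def width_def by (simp add: inner_commute abs_le_iff field_simps)
    moreover have "\<bar>s * d2 + t * d1\<bar> \<le> H / 2"
    proof -
      have "inner v x = t * inner \<nu> x + s * inner e x" by (subst v) (simp add: inner_add_left)
      hence "s * d2 + t * d1 = inner v x - m2"
        unfolding d1_def d2_def using \<open>0 < s\<close> by (simp add: field_simps inner_commute)
      thus ?thesis
        using support_fun_ge[OF K(1) x(1), of v] support_fun_ge[OF K(1) x(1), of "- v"]
        unfolding m2_def H_def width_def abs_le_iff inner_minus_left by argo
    qed
    ultimately have "d1\<^sup>2 + d2\<^sup>2 \<le> (H / s)\<^sup>2"
      using sum_sq_le_of_two_strips[OF \<open>0 < s\<close> \<open>0 \<le> W\<close>] \<open>W\<^sup>2 * (s\<^sup>2 + t\<^sup>2) \<le> H\<^sup>2\<close> by blast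
    hence "(dist z q)\<^sup>2 \<le> (H / s)\<^sup>2" using dist by simp
    hence "dist z q \<le> H / s" by (rule power2_le_imp_le) (use \<open>0 \<le> H\<close> \<open>0 < s\<close> in simp)
    thus "q \<in> cball z (H / s)" by simp
  qed
  moreover have "z \<in> span {\<nu>, e}" unfolding z_def mem_span_pair by blast
  ultimately show ?thesis using that unfolding H_def by blast
qed

lemma R_2_le_width_div_norm_perp_proj:
  fixes K :: "'a::euclidean_space set"
  assumes K: "compact K" "K \<noteq> {}" and \<nu>: "norm \<nu> = 1"
    and min_width: "\<And>w. norm w = 1 \<Longrightarrow> width K \<nu> \<le> width K w"
    and "perp_proj \<nu> v \<noteq> 0"
  shows "R_i 2 K \<le> width K v / norm (perp_proj \<nu> v)"
proof -
  obtain e where e: "norm e = 1" "inner \<nu> e = 0"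
    and v: "v = inner v \<nu> *\<^sub>R \<nu> + norm (perp_proj \<nu> v) *\<^sub>R e"
    using perp_proj_decomposition[OF \<nu> assms(5)] .
  have "v \<noteq> 0" using assms(5) by (auto simp: perp_proj_def)
  hence "width K \<nu> * norm v \<le> width K v"
    using min_width[of "sgn v"] width_scaleR[OF K, of "norm v" "sgn v"]
    by (simp add: norm_sgn sgn_div_norm mult.commute mult_left_mono)
  then obtain z where "z \<in> span {\<nu>, e}"
    "orth_proj (span {\<nu>, e}) ` K \<subseteq> cball z (width K v / norm (perp_proj \<nu> v))"
    using planar_projection_subset_cball[OF K \<nu> e v] assms(5) by auto
  thus ?thesis
    using R_i_le_of_proj_subset_cball[OF K(2) span_orthonormal_pair_in_lin_subspaces[OF \<nu> e]] by blast
qed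

lemma ratio_le_of_sq_bound:
  fixes R r \<Lambda> s :: real
  assumes "0 < r" "0 < s" "R \<le> r * \<Lambda> / s" "\<Lambda>\<^sup>2 \<le> 8 * n * s\<^sup>2"
  shows "R / r \<le> 2 * sqrt 2 * sqrt n"
proof -
  have "R / r \<le> \<Lambda> / s" using assms(1,3) by (simp add: pos_divide_le_eq algebra_simps)
  also have "(\<Lambda> / s)\<^sup>2 \<le> 8 * n" using assms(2,4) by (simp add: power_divide divide_le_eq)
  hence "\<Lambda> / s \<le> sqrt (8 * n)" by (rule real_le_rsqrt)
  also have "sqrt (8 * n) = 2 * sqrt 2 * sqrt n"
    using real_sqrt_mult[of 4 2] real_sqrt_mult[of 8 n] by simp
  finally show ?thesis .
qed

theorem theorem1p3:
  fixes K :: "'a::euclidean_space set"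
  assumes "DIM('a) \<ge> 2"
    and "convex_body K"
    and "r_i (DIM('a) - 1) K > 0"
  shows "R_i 2 K / r_i (DIM('a) - 1) K \<le> 2 * sqrt 2 * sqrt (DIM('a))"
proof -
  define r where "r = r_i (DIM('a) - 1) K"
  have K: "compact K" "convex K" "K \<noteq> {}" using assms(2) unfolding convex_body_def by auto
  obtain \<nu> where \<nu>: "norm \<nu> = 1" and min_width: "\<And>w. norm w = 1 \<Longrightarrow> width K \<nu> \<le> width K w"
    using exists_min_width_direction[OF K(1,3)] by blast
  have max: "\<rho> \<le> r" if "\<rho> \<ge> 0" "section_ball \<nu> c \<rho> \<subseteq> K" for c \<rho>
    using section_ball_radius_le_r_i[OF compact_imp_bounded[OF K(1)] assms(1) \<nu> that] by (simp add: r_def)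
  obtain v \<Lambda> where "0 < \<Lambda>" "width K v \<le> r * \<Lambda>"
    and sq: "\<Lambda>\<^sup>2 \<le> 8 * real DIM('a) * (norm (perp_proj \<nu> v))\<^sup>2"
    by (rule exists_transverse_direction_of_small_width[OF K assms(1) \<nu> max])
  hence "perp_proj \<nu> v \<noteq> 0" by auto
  have "R_i 2 K \<le> width K v / norm (perp_proj \<nu> v)"
    by (rule R_2_le_width_div_norm_perp_proj[OF K(1,3) \<nu> min_width \<open>perp_proj \<nu> v \<noteq> 0\<close>])
  also have "\<dots> \<le> r * \<Lambda> / norm (perp_proj \<nu> v)"
    using \<open>width K v \<le> r * \<Lambda>\<close> by (simp add: divide_right_mono)
  finally show ?thesis
    using ratio_le_of_sq_bound[OF _ _ _ sq] assms(3) \<open>perp_proj \<nu> v \<noteq> 0\<close> unfolding r_def by simp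
qed

end
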